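(* Let $M$ be a matroid of rank $n$, where $n \ge 2$, let $B_1, \dots, B_n$ be pairwise disjoint bases of $M$, and let $\alpha = 3\lceil \log n\rceil$. Suppose $\alpha$-element subsets $S_1 \subseteq B_1, \dots, S_n \subseteq B_n$ are chosen independently, each uniformly at random. Then the probability that $(S_1,\dots,S_n)$ does not contain a transversal basis (a basis of $M$ containing exactly one element from each $S_i$) is at most $$\sum_{k=1}^{n} \binom{n}{k}\binom{n}{k-1}\left(\frac{k-1}{n}\right)^{k\alpha}.$$
   Context: Here $\log$ denotes the natural logarithm. *)

theory Defs
  imports "HOL-Probability.Probability"
begin

definition matroid :: "'a set \<Rightarrow> ('a set \<Rightarrow> bool) \<Rightarrow> bool" where
  "matroid E indep \<longleftrightarrow>
     finite E \<and> indep {} \<and>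
     (\<forall>X. indep X \<longrightarrow> X \<subseteq> E) \<and>
     (\<forall>X Y. indep X \<and> Y \<subseteq> X \<longrightarrow> indep Y) \<and>
     (\<forall>X Y. indep X \<and> indep Y \<and> card X < card Y \<longrightarrow>
        (\<exists>y \<in> Y - X. indep (insert y X)))"

definition matroid_basis :: "'a set \<Rightarrow> ('a set \<Rightarrow> bool) \<Rightarrow> 'a set \<Rightarrow> bool" where
  "matroid_basis E indep B \<longleftrightarrow>
     indep B \<and> B \<subseteq> E \<and> (\<forall>X. X \<subseteq> E \<and> indep X \<and> B \<subseteq> X \<longrightarrow> X = B)"

definition matroid_rank :: "'a set \<Rightarrow> ('a set \<Rightarrow> bool) \<Rightarrow> nat" where
  "matroid_rank E indep = Max {card X | X. X \<subseteq> E \<and> indep X}"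

definition has_transversal_basis ::
  "'a set \<Rightarrow> ('a set \<Rightarrow> bool) \<Rightarrow> nat \<Rightarrow> (nat \<Rightarrow> 'a set) \<Rightarrow> bool" where
  "has_transversal_basis E indep n S \<longleftrightarrow>
     (\<exists>T. matroid_basis E indep T \<and> (\<forall>i\<in>{1..n}. card (T \<inter> S i) = 1))"

definition random_subsets :: "nat \<Rightarrow> (nat \<Rightarrow> 'a set) \<Rightarrow> nat \<Rightarrow> (nat \<Rightarrow> 'a set) pmf" where
  "random_subsets n B m =
     Pi_pmf {1..n} {} (\<lambda>i. pmf_of_set {S. S \<subseteq> B i \<and> card S = m})"

end

theory Submission
  imports Defs
begin

text \<open>By Rado's theorem (Hall's theorem for matroids) the sets \<open>S\<^sub>1, \<dots>, S\<^sub>n\<close> contain a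
  transversal basis unless some \<open>I \<subseteq> {1..n}\<close> of size \<open>k \<ge> 1\<close> has \<open>rk (\<Union>\<^sub>i\<^sub>\<in>\<^sub>I S\<^sub>i) \<le> k - 1\<close>.
  For fixed \<open>I\<close> this event is controlled by the potential
  \<open>\<phi>(X) = (n - rk X choose k - 1 - rk X)\<close>, which is at least \<open>1\<close> on the event and equals
  \<open>(n choose k - 1)\<close> at \<open>X = {}\<close>. Adding a random element of a basis \<open>B\<close> raises the rank of \<open>X\<close>
  unless it lies in the span of \<open>X\<close>, which contains at most \<open>rk X\<close> elements of \<open>B\<close>; hence adding a
  uniformly random \<open>q\<close>-subset of \<open>B\<close> multiplies the expectation of \<open>\<phi>\<close> by at most
  \<open>(k - 1 choose q) / (n choose q)\<close>, which is at most \<open>((k - 1) / n)\<^sup>\<alpha>\<close> for \<open>q = min \<alpha> n\<close>.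
  Independence of the \<open>S\<^sub>i\<close> and a union bound over the \<open>(n choose k)\<close> sets \<open>I\<close> give the sum.\<close>

lemma sum_subsets_card_Suc:
  fixes g :: "'a set \<Rightarrow> 'b::comm_semiring_1"
  assumes "finite D"
  shows "of_nat (Suc m) * (\<Sum>S | S \<subseteq> D \<and> card S = Suc m. g S)
    = (\<Sum>x\<in>D. \<Sum>S | S \<subseteq> D - {x} \<and> card S = m. g (insert x S))"
proof -
  let ?F = "{S. S \<subseteq> D \<and> card S = Suc m}"
  have fin: "finite ?F" using assms by simp
  have "of_nat (Suc m) * (\<Sum>S\<in>?F. g S) = (\<Sum>S\<in>?F. \<Sum>x | x \<in> D \<and> x \<in> S. g S)"
    unfolding sum_distrib_left
  proof (rule sum.cong[OF refl])
    fix S assume "S \<in> ?F"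
    then have "{x. x \<in> D \<and> x \<in> S} = S" "card S = Suc m" by auto
    then show "of_nat (Suc m) * g S = (\<Sum>x | x \<in> D \<and> x \<in> S. g S)" by simp
  qed
  also have "\<dots> = (\<Sum>x\<in>D. \<Sum>S | S \<in> ?F \<and> x \<in> S. g S)"
    by (rule sum.swap_restrict[OF fin assms])
  also have "\<dots> = (\<Sum>x\<in>D. \<Sum>S | S \<subseteq> D - {x} \<and> card S = m. g (insert x S))"
  proof (rule sum.cong[OF refl])
    fix x assume x: "x \<in> D"
    have "{S. S \<in> ?F \<and> x \<in> S} = insert x ` {S. S \<subseteq> D - {x} \<and> card S = m}"
    proof (intro equalityI subsetI)
      fix S assume S: "S \<in> {S. S \<in> ?F \<and> x \<in> S}"
      then have "S = insert x (S - {x})" "finite S" using assms by (auto intro: finite_subset)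
      with S show "S \<in> insert x ` {S. S \<subseteq> D - {x} \<and> card S = m}"
        by (intro image_eqI[of _ _ "S - {x}"]) auto
    next
      fix S assume "S \<in> insert x ` {S. S \<subseteq> D - {x} \<and> card S = m}"
      then obtain S' where "S = insert x S'" "S' \<subseteq> D - {x}" "card S' = m" by auto
      moreover have "finite S'" "x \<notin> S'" using \<open>S' \<subseteq> D - {x}\<close> assms by (auto intro: finite_subset)
      ultimately show "S \<in> {S. S \<in> ?F \<and> x \<in> S}" using x by auto
    qed
    moreover have "inj_on (insert x) {S. S \<subseteq> D - {x} \<and> card S = m}"
      by (rule inj_onI) auto
    ultimately show "(\<Sum>S | S \<in> ?F \<and> x \<in> S. g S) = (\<Sum>S | S \<subseteq> D - {x} \<and> card S = m. g (insert x S))"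
      by (simp add: sum.reindex)
  qed
  finally show ?thesis .
qed

lemma binomial_mult_power_le:
  fixes K n q :: nat
  assumes "K \<le> n"
  shows "real (K choose q) * real n ^ q \<le> real (n choose q) * real K ^ q"
proof (induction q)
  case (Suc q)
  show ?case
  proof (cases "q < K")
    case True
    have absorb: "real (Suc q) * real (m choose Suc q) = real (m - q) * real (m choose q)" for m
      using binomial_absorb_comp[of m q] binomial_absorption[of q m] unfolding of_nat_mult[symmetric] by simp
    have "real (K - q) * real n \<le> real (n - q) * real K"
      using True assms by (simp add: of_nat_diff algebra_simps mult_right_mono)
    then have "(real (K choose q) * real n ^ q) * (real (K - q) * real n)
        \<le> (real (n choose q) * real K ^ q) * (real (n - q) * real K)"
      by (rule mult_mono[OF Suc.IH]) simp_all
    then have "real (Suc q) * (real (K choose Suc q) * real n ^ Suc q)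
        \<le> real (Suc q) * (real (n choose Suc q) * real K ^ Suc q)"
      by (simp only: absorb mult.assoc[symmetric] power_Suc) (simp only: mult_ac)
    then show ?thesis by (rule mult_left_le_imp_le) simp
  qed (simp add: binomial_eq_0)
qed simp

lemma binomial_diff_Suc_mult:
  "real ((k - Suc t) choose m) * real (k - t) = real ((k - t) choose Suc m) * real (Suc m)"
proof (cases "t < k")
  case True
  then have "k - t = Suc (k - Suc t)" by simp
  then show ?thesis
    using Suc_times_binomial_eq[of "k - Suc t" m] unfolding of_nat_mult[symmetric] by (simp only: mult.commute)
qed simp

lemma binomial_ratio_le_power:
  fixes K n \<alpha> :: nat
  assumes "K < n"
  shows "real (K choose min \<alpha> n) / real (n choose min \<alpha> n) \<le> (real K / real n) ^ \<alpha>"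
proof (cases "\<alpha> \<le> n")
  case True
  have "real (K choose \<alpha>) * real n ^ \<alpha> \<le> real (n choose \<alpha>) * real K ^ \<alpha>"
    using assms by (intro binomial_mult_power_le) simp
  moreover have "0 < real (n choose \<alpha>)" "0 < real n" using True assms by simp_all
  ultimately show ?thesis
    using True by (simp add: divide_simps power_divide mult.commute)
qed (use assms in \<open>simp add: binomial_eq_0\<close>)

lemma nn_integral_Pi_pmf_Union_le:
  fixes h :: "'b set \<Rightarrow> ennreal" and p :: "'a \<Rightarrow> 'b set pmf"
  assumes "finite A" and step: "\<And>i X. i \<in> A \<Longrightarrow> (\<integral>\<^sup>+y. h (X \<union> y) \<partial>p i) \<le> c * h X"
  shows "(\<integral>\<^sup>+f. h (X \<union> \<Union>(f ` A)) \<partial>Pi_pmf A dflt p) \<le> c ^ card A * h X"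
  using assms
proof (induction A arbitrary: X rule: finite_induct)
  case (insert a A)
  have "(\<integral>\<^sup>+f. h (X \<union> \<Union>(f ` insert a A)) \<partial>Pi_pmf (insert a A) dflt p)
      = (\<integral>\<^sup>+y. \<integral>\<^sup>+f. h (X \<union> \<Union>((f(a := y)) ` insert a A)) \<partial>Pi_pmf A dflt p \<partial>p a)"
    using insert.hyps by (simp add: Pi_pmf_insert nn_integral_pair_pmf' case_prod_unfold)
  also have "\<dots> = (\<integral>\<^sup>+y. \<integral>\<^sup>+f. h ((X \<union> y) \<union> \<Union>(f ` A)) \<partial>Pi_pmf A dflt p \<partial>p a)"
  proof -
    have "\<Union>((f(a := y)) ` insert a A) = y \<union> \<Union>(f ` A)" for f :: "'a \<Rightarrow> 'b set" and y
      using insert.hyps(2) by (auto split: if_splits)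
    then show ?thesis by (simp only: Un_assoc)
  qed
  also have "\<dots> \<le> (\<integral>\<^sup>+y. c ^ card A * h (X \<union> y) \<partial>p a)"
    using insert.IH insert.prems by (intro nn_integral_mono) auto
  also have "\<dots> = c ^ card A * (\<integral>\<^sup>+y. h (X \<union> y) \<partial>p a)"
    by (simp add: nn_integral_cmult)
  also have "\<dots> \<le> c ^ card A * (c * h X)"
    using insert.prems by (intro mult_left_mono) auto
  finally show ?case using insert.hyps by (simp add: mult_ac)
qed simp

lemma prob_Pi_pmf_subset:
  assumes "finite A" "I \<subseteq> A" and Q: "\<And>f g. (\<And>i. i \<in> I \<Longrightarrow> f i = g i) \<Longrightarrow> f \<in> Q \<longleftrightarrow> g \<in> Q"
  shows "measure_pmf.prob (Pi_pmf A dflt p) Q = measure_pmf.prob (Pi_pmf I dflt p) Q"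
proof -
  have "(\<lambda>f x. if x \<in> I then f x else dflt) -` Q = Q"
  proof (intro set_eqI)
    fix f
    show "f \<in> (\<lambda>f x. if x \<in> I then f x else dflt) -` Q \<longleftrightarrow> f \<in> Q"
      using Q[of "\<lambda>x. if x \<in> I then f x else dflt" f] by simp
  qed
  then show ?thesis
    unfolding Pi_pmf_subset[OF assms(1,2), of dflt p] measure_map_pmf by simp
qed

lemma set_pmf_random_subsetsD:
  assumes "S \<in> set_pmf (random_subsets n B m)" "i \<in> {1..n}" "finite (B i)" "m \<le> card (B i)"
  shows "S i \<subseteq> B i"
proof -
  have "{S. S \<subseteq> B i \<and> card S = m} \<noteq> {}"
    using obtain_subset_with_card_n[OF assms(4)] by auto
  moreover have "S i \<in> set_pmf (pmf_of_set {S. S \<subseteq> B i \<and> card S = m})"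
    using assms(1,2) by (auto simp: random_subsets_def set_Pi_pmf PiE_dflt_def)
  ultimately show ?thesis using assms(3) by auto
qed

definition rank_potential :: "nat \<Rightarrow> nat \<Rightarrow> nat \<Rightarrow> real" where
  "rank_potential n K r = (if r \<le> K then real ((n - r) choose (K - r)) else 0)"

lemma rank_potential_nonneg: "0 \<le> rank_potential n K r"
  by (simp add: rank_potential_def)

lemma one_le_rank_potential: "r \<le> K \<Longrightarrow> K \<le> n \<Longrightarrow> 1 \<le> rank_potential n K r"
  by (simp add: rank_potential_def Suc_leI zero_less_binomial)

lemma rank_potential_Suc_le:
  assumes "K \<le> n" shows "rank_potential n K (Suc r) \<le> rank_potential n K r"
proof (cases "Suc r \<le> K")
  case True
  then have "n - r = Suc (n - Suc r)" "K - r = Suc (K - Suc r)" using assms by simp_all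
  then show ?thesis using True by (simp add: rank_potential_def binomial_Suc_Suc)
qed (simp add: rank_potential_def)

lemma rank_potential_Suc:
  assumes "r < K" "K \<le> n"
  shows "real (n - r) * rank_potential n K (Suc r) = real (K - r) * rank_potential n K r"
proof -
  have "n - r = Suc (n - Suc r)" "K - r = Suc (K - Suc r)" using assms by simp_all
  then have "(n - r) * ((n - Suc r) choose (K - Suc r)) = (K - r) * ((n - r) choose (K - r))"
    using Suc_times_binomial_eq[of "n - Suc r" "K - Suc r"] by (simp add: mult.commute)
  then have "real (n - r) * real ((n - Suc r) choose (K - Suc r)) = real (K - r) * real ((n - r) choose (K - r))"
    unfolding of_nat_mult[symmetric] by (rule arg_cong)
  then show ?thesis using assms unfolding rank_potential_def by simp
qed

text \<open>Of the \<open>n - t\<close> elements of a basis outside \<open>T \<subseteq> X\<close>, \<open>c\<close> keep the rank \<open>r\<close> of \<open>X\<close>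
  and the others raise it by one.\<close>
lemma rank_potential_average_le:
  assumes "c + t \<le> r" "r \<le> n" "K \<le> n"
  shows "real c * rank_potential n K r + real (n - t - c) * rank_potential n K (Suc r)
    \<le> real (K - t) * rank_potential n K r"
proof -
  define x where "x = rank_potential n K r"
  define y where "y = rank_potential n K (Suc r)"
  have "y \<le> x" unfolding x_def y_def by (rule rank_potential_Suc_le[OF assms(3)])
  then have extra: "real (r - t - c) * y \<le> real (r - t - c) * x"
    by (simp add: mult_left_mono)
  have split: "real (n - t - c) = real (n - r) + real (r - t - c)" using assms by simp
  consider "r < K" | "r = K" | "K < r" by linarith
  then have "real c * x + real (n - t - c) * y \<le> real (K - t) * x"
  proof cases
    case 1
    then have "real (n - r) * y = real (K - r) * x"
      unfolding x_def y_def by (rule rank_potential_Suc[OF _ assms(3)])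
    moreover have "real (K - t) = real c + real (K - r) + real (r - t - c)"
      using assms 1 by simp
    ultimately show ?thesis using extra unfolding split by (simp add: algebra_simps)
  next
    case 2
    then show ?thesis using assms rank_potential_nonneg[of n K r]
      by (simp add: x_def y_def rank_potential_def mult_right_mono)
  next
    case 3
    then show ?thesis by (simp add: x_def y_def rank_potential_def)
  qed
  then show ?thesis unfolding x_def y_def .
qed

locale indep_matroid =
  fixes E :: "'a set" and indep :: "'a set \<Rightarrow> bool"
  assumes matroid: "matroid E indep"
begin

lemma finite_ground: "finite E"
  and indep_empty: "indep {}"
  and indep_subset_ground: "indep X \<Longrightarrow> X \<subseteq> E"
  and indep_subset: "indep X \<Longrightarrow> Y \<subseteq> X \<Longrightarrow> indep Y"
  and indep_augment: "indep X \<Longrightarrow> indep Y \<Longrightarrow> card X < card Y \<Longrightarrow> \<exists>y\<in>Y - X. indep (insert y X)"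
  using matroid by (simp_all add: matroid_def)

lemma indep_finite: "indep X \<Longrightarrow> finite X"
  using finite_subset[OF indep_subset_ground finite_ground] .

definition rk :: "'a set \<Rightarrow> nat" where
  "rk X = Max {card Y | Y. Y \<subseteq> X \<and> indep Y}"

lemma finite_indep_cards: "finite {card Y | Y. Y \<subseteq> X \<and> indep Y}"
  by (rule finite_subset[of _ "card ` Pow E"]) (use indep_subset_ground finite_ground in auto)

lemma card_le_rk: "indep Y \<Longrightarrow> Y \<subseteq> X \<Longrightarrow> card Y \<le> rk X"
  unfolding rk_def by (rule Max_ge[OF finite_indep_cards]) auto

lemma rk_witness:
  obtains Y where "Y \<subseteq> X" "indep Y" "card Y = rk X"
proof -
  have "rk X \<in> {card Y | Y. Y \<subseteq> X \<and> indep Y}"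
    unfolding rk_def by (rule Max_in[OF finite_indep_cards]) (use indep_empty in auto)
  then obtain Y where "Y \<subseteq> X" "indep Y" "card Y = rk X" by auto
  then show ?thesis by (rule that)
qed

lemma rk_mono:
  assumes "X \<subseteq> Z" shows "rk X \<le> rk Z"
proof -
  obtain Y where "Y \<subseteq> X" "indep Y" "card Y = rk X" by (rule rk_witness)
  with assms card_le_rk[of Y Z] show ?thesis by auto
qed

lemma rk_le_card:
  assumes "finite X" shows "rk X \<le> card X"
proof -
  obtain Y where "Y \<subseteq> X" "card Y = rk X" by (rule rk_witness)
  with card_mono[OF assms \<open>Y \<subseteq> X\<close>] show ?thesis by simp
qed

lemma rk_empty [simp]: "rk {} = 0"
  using rk_le_card[of "{}"] by simp

lemma rk_le_rk_ground: "rk X \<le> rk E"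
proof -
  obtain Y where "Y \<subseteq> X" "indep Y" "card Y = rk X" by (rule rk_witness)
  with card_le_rk[of Y E] indep_subset_ground show ?thesis by auto
qed

lemma indep_if_rk_eq_card:
  assumes "finite X" "rk X = card X" shows "indep X"
proof -
  obtain Y where "Y \<subseteq> X" "indep Y" "card Y = rk X" by (rule rk_witness)
  with card_subset_eq[OF assms(1)] assms(2) show ?thesis by auto
qed

lemma rk_insert_le: "rk (insert x X) \<le> Suc (rk X)"
proof -
  obtain Y where Y: "Y \<subseteq> insert x X" "indep Y" "card Y = rk (insert x X)"
    by (rule rk_witness)
  have "card (Y - {x}) \<le> rk X"
    using Y indep_subset[OF Y(2), of "Y - {x}"] by (intro card_le_rk) auto
  moreover have "card Y \<le> Suc (card (Y - {x}))"
    using indep_finite[OF Y(2)] by (cases "x \<in> Y") (auto simp: card_Suc_Diff1)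
  ultimately show ?thesis using Y(3) by simp
qed

lemma indep_extend_to_rk:
  assumes "indep J" "J \<subseteq> Y"
  obtains J' where "J \<subseteq> J'" "J' \<subseteq> Y" "indep J'" "card J' = rk Y"
proof -
  have bound: "\<forall>J''. J \<subseteq> J'' \<and> J'' \<subseteq> Y \<and> indep J'' \<longrightarrow> card J'' < Suc (card E)"
    using card_mono[OF finite_ground indep_subset_ground] by (simp add: le_imp_less_Suc)
  obtain J' where J': "J \<subseteq> J'" "J' \<subseteq> Y" "indep J'"
    and max: "\<forall>J''. J \<subseteq> J'' \<and> J'' \<subseteq> Y \<and> indep J'' \<longrightarrow> card J'' \<le> card J'"
    using ex_has_greatest_nat[of _ J, OF _ bound] assms by auto
  have "card J' = rk Y"
  proof (rule ccontr)
    assume "card J' \<noteq> rk Y"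
    moreover have "card J' \<le> rk Y" using J'(2,3) by (rule card_le_rk[rotated])
    ultimately have "card J' < rk Y" by simp
    moreover obtain Z where Z: "Z \<subseteq> Y" "indep Z" "card Z = rk Y" by (rule rk_witness)
    ultimately obtain z where z: "z \<in> Z - J'" "indep (insert z J')"
      using indep_augment[OF J'(3) Z(2)] by auto
    then have "card (insert z J') \<le> card J'"
      using max[rule_format, of "insert z J'"] J' Z(1) by auto
    with z(1) indep_finite[OF J'(3)] show False by simp
  qed
  with J' show ?thesis by (rule that)
qed

lemma rk_submodular: "rk (P \<union> Q) + rk (P \<inter> Q) \<le> rk P + rk Q"
proof -
  obtain J where J: "J \<subseteq> P \<inter> Q" "indep J" "card J = rk (P \<inter> Q)"
    by (rule rk_witness)
  obtain J' where J': "J \<subseteq> J'" "J' \<subseteq> P \<union> Q" "indep J'" "card J' = rk (P \<union> Q)"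
    using indep_extend_to_rk[OF J(2), of "P \<union> Q"] J(1) by auto
  have fin: "finite J'" using J'(3) by (rule indep_finite)
  have "card (J' \<inter> P) + card (J' \<inter> Q) = card ((J' \<inter> P) \<union> (J' \<inter> Q)) + card ((J' \<inter> P) \<inter> (J' \<inter> Q))"
    using fin by (intro card_Un_Int) auto
  also have "(J' \<inter> P) \<union> (J' \<inter> Q) = J'" using J'(2) by auto
  also have "(J' \<inter> P) \<inter> (J' \<inter> Q) = J' \<inter> (P \<inter> Q)" by auto
  finally have "card (J' \<inter> P) + card (J' \<inter> Q) = card J' + card (J' \<inter> (P \<inter> Q))" .
  moreover have "card J \<le> card (J' \<inter> (P \<inter> Q))"
    using J(1) J'(1) fin by (intro card_mono) auto
  moreover have "indep (J' \<inter> P)" "indep (J' \<inter> Q)"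
    using indep_subset[OF J'(3)] by auto
  then have "card (J' \<inter> P) \<le> rk P" "card (J' \<inter> Q) \<le> rk Q"
    by (auto intro: card_le_rk)
  ultimately show ?thesis using J(3) J'(4) by linarith
qed

lemma rk_Un_eq_if_insert_eq:
  assumes "\<And>a. a \<in> A \<Longrightarrow> rk (insert a X) = rk X"
  shows "rk (X \<union> A) = rk X"
proof (rule ccontr)
  assume "rk (X \<union> A) \<noteq> rk X"
  then have "rk X < rk (X \<union> A)" using rk_mono[OF Un_upper1] by (simp add: order_less_le)
  moreover obtain I where I: "I \<subseteq> X" "indep I" "card I = rk X" by (rule rk_witness)
  moreover obtain J where J: "J \<subseteq> X \<union> A" "indep J" "card J = rk (X \<union> A)" by (rule rk_witness)
  ultimately obtain z where z: "z \<in> J - I" "indep (insert z I)"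
    using indep_augment[of I J] by auto
  then have "Suc (rk X) \<le> rk (insert z X)"
    using I card_le_rk[of "insert z I" "insert z X"] indep_finite[OF I(2)] by auto
  moreover have "rk (insert z X) = rk X"
    using z(1) J(1) assms by (cases "z \<in> X") (auto simp: insert_absorb)
  ultimately show False by simp
qed

lemma card_basis:
  assumes "matroid_basis E indep B"
  shows "card B = rk E"
proof (rule ccontr)
  have B: "indep B" "B \<subseteq> E" "\<And>X. X \<subseteq> E \<Longrightarrow> indep X \<Longrightarrow> B \<subseteq> X \<Longrightarrow> X = B"
    using assms by (auto simp: matroid_basis_def)
  assume "card B \<noteq> rk E"
  then have "card B < rk E" using card_le_rk[OF B(1,2)] by simp
  moreover obtain Y where "indep Y" "card Y = rk E" by (rule rk_witness)
  ultimately obtain y where "y \<in> Y - B" "indep (insert y B)"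
    using indep_augment[OF B(1), of Y] by auto
  then show False using B(3)[of "insert y B"] indep_subset_ground by auto
qed

definition rado_condition :: "'i set \<Rightarrow> ('i \<Rightarrow> 'a set) \<Rightarrow> bool" where
  "rado_condition A S \<longleftrightarrow> (\<forall>I\<subseteq>A. card I \<le> rk (\<Union>(S ` I)))"

lemma rado_conditionD: "rado_condition A S \<Longrightarrow> I \<subseteq> A \<Longrightarrow> card I \<le> rk (\<Union>(S ` I))"
  by (simp add: rado_condition_def)

lemma indep_transversal_if_card_le_1:
  assumes "finite A" "rado_condition A S" "\<And>i. i \<in> A \<Longrightarrow> finite (S i) \<and> card (S i) \<le> 1"
  shows "\<exists>f. (\<forall>i\<in>A. f i \<in> S i) \<and> inj_on f A \<and> indep (f ` A)"
proof -
  have "\<exists>x. S i = {x}" if i: "i \<in> A" for i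
  proof -
    have "S i \<noteq> {}"
      using rado_conditionD[OF assms(2), of "{i}"] i by auto
    with assms(3)[OF i] have "card (S i) = 1" by (simp add: le_antisym Suc_leI card_gt_0_iff)
    then show ?thesis by (simp add: card_1_singleton_iff)
  qed
  then obtain f where f: "\<And>i. i \<in> A \<Longrightarrow> S i = {f i}" by metis
  then have "\<Union>(S ` A) = f ` A" by auto
  then have "card A \<le> rk (f ` A)"
    using rado_conditionD[OF assms(2), of A] by auto
  moreover have "rk (f ` A) \<le> card (f ` A)" "card (f ` A) \<le> card A"
    using assms(1) by (simp_all add: rk_le_card card_image_le)
  ultimately have "inj_on f A" "indep (f ` A)"
    using assms(1) by (simp_all add: eq_card_imp_inj_on indep_if_rk_eq_card)
  with f show ?thesis by auto
qed

lemma rado_condition_fun_upd_deficient_imp_mem: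
  assumes "rado_condition A S" "I \<subseteq> A" "rk (\<Union>((S(i := T)) ` I)) < card I"
  shows "i \<in> I"
proof (rule ccontr)
  assume "i \<notin> I"
  then have "(S(i := T)) ` I = S ` I" by auto
  with assms(3) have "rk (\<Union>(S ` I)) < card I" by (simp only:)
  with rado_conditionD[OF assms(1,2)] show False by simp
qed

text \<open>The key step of Rado's theorem: if two sets \<open>I\<^sub>x, I\<^sub>y\<close> became deficient after deleting
  \<open>x\<close>, resp. \<open>y\<close>, from \<open>S i\<close>, submodularity would make \<open>I\<^sub>x \<union> I\<^sub>y\<close> or \<open>I\<^sub>x \<inter> I\<^sub>y - {i}\<close>
  deficient already for \<open>S\<close>.\<close>
lemma rado_condition_delete:
  assumes A: "finite A" and rado: "rado_condition A S"
    and i: "i \<in> A" and xy: "x \<in> S i" "y \<in> S i" "x \<noteq> y"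
  shows "rado_condition A (S(i := S i - {x})) \<or> rado_condition A (S(i := S i - {y}))"
proof (rule ccontr)
  define Sx where "Sx = S(i := S i - {x})"
  define Sy where "Sy = S(i := S i - {y})"
  assume "\<not> ?thesis"
  then obtain Ix Iy where Ix: "Ix \<subseteq> A" "rk (\<Union>(Sx ` Ix)) < card Ix"
    and Iy: "Iy \<subseteq> A" "rk (\<Union>(Sy ` Iy)) < card Iy"
    unfolding rado_condition_def Sx_def Sy_def by (auto simp: not_le)
  have "i \<in> Ix" "i \<in> Iy"
    using rado_condition_fun_upd_deficient_imp_mem[OF rado Ix(1) Ix(2)[unfolded Sx_def]]
      rado_condition_fun_upd_deficient_imp_mem[OF rado Iy(1) Iy(2)[unfolded Sy_def]] .
  define P where "P = \<Union>(Sx ` Ix)"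
  define Q where "Q = \<Union>(Sy ` Iy)"
  have "card (Ix \<union> Iy) \<le> rk (\<Union>(S ` (Ix \<union> Iy)))"
    using Ix(1) Iy(1) by (intro rado_conditionD[OF rado]) auto
  also have "\<dots> \<le> rk (P \<union> Q)"
    using \<open>i \<in> Ix\<close> \<open>i \<in> Iy\<close> xy(3) unfolding P_def Q_def Sx_def Sy_def by (intro rk_mono) auto
  finally have union: "card (Ix \<union> Iy) \<le> rk (P \<union> Q)" .
  have "card (Ix \<inter> Iy - {i}) \<le> rk (\<Union>(S ` (Ix \<inter> Iy - {i})))"
    using Ix(1) by (intro rado_conditionD[OF rado]) auto
  also have "\<dots> \<le> rk (P \<inter> Q)"
    unfolding P_def Q_def Sx_def Sy_def by (intro rk_mono) auto
  finally have inter: "card (Ix \<inter> Iy - {i}) \<le> rk (P \<inter> Q)" .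
  have fin: "finite Ix" "finite Iy" using Ix(1) Iy(1) A by (auto intro: finite_subset)
  moreover have "0 < card (Ix \<inter> Iy)"
    using fin \<open>i \<in> Ix\<close> \<open>i \<in> Iy\<close> by (auto simp: card_gt_0_iff)
  ultimately have "card Ix + card Iy = card (Ix \<union> Iy) + card (Ix \<inter> Iy - {i}) + 1"
    using \<open>i \<in> Ix\<close> \<open>i \<in> Iy\<close> card_Un_Int[OF fin] by simp
  with union inter rk_submodular[of P Q] Ix(2) Iy(2) show False
    unfolding P_def Q_def by linarith
qed

theorem indep_transversal_if_rado_condition:
  assumes "finite A" "\<And>i. i \<in> A \<Longrightarrow> finite (S i)" "rado_condition A S"
  shows "\<exists>f. (\<forall>i\<in>A. f i \<in> S i) \<and> inj_on f A \<and> indep (f ` A)"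
  using assms(2,3)
proof (induction "\<Sum>i\<in>A. card (S i)" arbitrary: S rule: less_induct)
  case less
  show ?case
  proof (cases "\<forall>i\<in>A. card (S i) \<le> 1")
    case True
    with less.prems show ?thesis by (intro indep_transversal_if_card_le_1[OF assms(1)]) auto
  next
    case False
    then obtain i x y where i: "i \<in> A" and xy: "x \<in> S i" "y \<in> S i" "x \<noteq> y"
      using less.prems(1) by (auto simp: card_le_Suc0_iff_eq)
    have delete: "\<exists>f. (\<forall>i\<in>A. f i \<in> S i) \<and> inj_on f A \<and> indep (f ` A)"
      if z: "z \<in> S i" and rado: "rado_condition A (S(i := S i - {z}))" for z
    proof -
      have "card (S i - {z}) < card (S i)"
        using less.prems(1)[OF i] z by (rule card_Diff1_less)
      then have "(\<Sum>j\<in>A. card ((S(i := S i - {z})) j)) < (\<Sum>j\<in>A. card (S j))"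
        using i assms(1) by (intro sum_strict_mono_ex1) auto
      moreover have "finite ((S(i := S i - {z})) j)" if "j \<in> A" for j
        using less.prems(1)[OF that] by auto
      ultimately have "\<exists>f. (\<forall>j\<in>A. f j \<in> (S(i := S i - {z})) j) \<and> inj_on f A \<and> indep (f ` A)"
        by (rule less.hyps[OF _ _ rado])
      then obtain f where "\<forall>j\<in>A. f j \<in> (S(i := S i - {z})) j" "inj_on f A" "indep (f ` A)"
        by auto
      then show ?thesis by (intro exI[of _ f]) (auto split: if_splits)
    qed
    from rado_condition_delete[OF assms(1) less.prems(2) i xy] show ?thesis
      using delete xy by auto
  qed
qed

lemma card_rk_unchanged_le:
  assumes "indep B" "T \<subseteq> B" "T \<subseteq> X"
  shows "card {x \<in> B - T. rk (insert x X) = rk X} + card T \<le> rk X"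
proof -
  define U where "U = {x \<in> B - T. rk (insert x X) = rk X}"
  have "rk (X \<union> (U \<union> T)) = rk X"
    using assms(3) by (intro rk_Un_eq_if_insert_eq) (auto simp: U_def insert_absorb)
  moreover have "indep (U \<union> T)"
    using assms(2) by (intro indep_subset[OF assms(1)]) (auto simp: U_def)
  then have "card (U \<union> T) \<le> rk (X \<union> (U \<union> T))"
    by (rule card_le_rk) auto
  moreover have "card (U \<union> T) = card U + card T"
    using indep_finite[OF \<open>indep (U \<union> T)\<close>] by (intro card_Un_disjoint) (auto simp: U_def)
  ultimately show ?thesis unfolding U_def by simp
qed

lemma sum_rank_potential_insert_le:
  assumes B: "indep B" "card B = n" and rank: "rk E = n" and "K \<le> n"
    and T: "T \<subseteq> B" "T \<subseteq> X"
  shows "(\<Sum>x\<in>B - T. rank_potential n K (rk (insert x X)))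
    \<le> real (K - card T) * rank_potential n K (rk X)"
proof -
  define r where "r = rk X"
  define U where "U = {x \<in> B - T. rk (insert x X) = r}"
  have fin: "finite (B - T)" using indep_finite[OF B(1)] by simp
  have U: "U \<subseteq> B - T" by (auto simp: U_def)
  then have "finite U" using fin by (rule finite_subset)
  have Suc: "rk (insert x X) = Suc r" if "x \<in> B - T - U" for x
    using that rk_insert_le[of x X] rk_mono[OF subset_insertI, of X x] by (auto simp: U_def r_def)
  have "(\<Sum>x\<in>B - T. rank_potential n K (rk (insert x X)))
      = (\<Sum>x\<in>U. rank_potential n K (rk (insert x X))) + (\<Sum>x\<in>B - T - U. rank_potential n K (rk (insert x X)))"
    using fin U by (simp add: sum.subset_diff)
  also have "\<dots> = real (card U) * rank_potential n K r + real (n - card T - card U) * rank_potential n K (Suc r)"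
  proof -
    have "(\<Sum>x\<in>U. rank_potential n K (rk (insert x X))) = (\<Sum>x\<in>U. rank_potential n K r)"
      by (rule sum.cong) (auto simp: U_def)
    moreover have "(\<Sum>x\<in>B - T - U. rank_potential n K (rk (insert x X))) = (\<Sum>x\<in>B - T - U. rank_potential n K (Suc r))"
      by (rule sum.cong) (simp_all add: Suc)
    moreover have "card (B - T) = n - card T"
      using B(2) indep_finite[OF B(1)] finite_subset[OF T(1)] T(1) by (simp add: card_Diff_subset)
    then have "card (B - T - U) = n - card T - card U"
      using U \<open>finite U\<close> by (simp add: card_Diff_subset)
    ultimately show ?thesis by simp
  qed
  also have "\<dots> \<le> real (K - card T) * rank_potential n K r"
  proof (rule rank_potential_average_le)
    show "card U + card T \<le> r"
      unfolding U_def r_def by (rule card_rk_unchanged_le[OF B(1) T])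
    show "r \<le> n" unfolding r_def using rk_le_rk_ground rank by simp
  qed fact
  finally show ?thesis unfolding r_def .
qed

lemma sum_rank_potential_subsets_le:
  assumes B: "indep B" "card B = n" and rank: "rk E = n" and K: "K \<le> n"
    and "T \<subseteq> B" "T \<subseteq> X"
  shows "(\<Sum>S | S \<subseteq> B - T \<and> card S = m. rank_potential n K (rk (X \<union> S)))
    \<le> real ((K - card T) choose m) * rank_potential n K (rk X)"
  using assms(5,6)
proof (induction m arbitrary: X T)
  case 0
  have "S = {}" if "S \<subseteq> B - T" "card S = 0" for S
    using that finite_subset[OF that(1)] indep_finite[OF B(1)] by auto
  then have "{S. S \<subseteq> B - T \<and> card S = 0} = {{}}" by auto
  then show ?case by simp
next
  case (Suc m)
  define C where "C = real ((K - Suc (card T)) choose m)"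
  define g where "g S = rank_potential n K (rk (X \<union> S))" for S
  have finT: "finite T" using finite_subset[OF Suc.prems(1) indep_finite[OF B(1)]] .
  have "real (Suc m) * (\<Sum>S | S \<subseteq> B - T \<and> card S = Suc m. g S)
      = (\<Sum>x\<in>B - T. \<Sum>S | S \<subseteq> B - T - {x} \<and> card S = m. g (insert x S))"
    using indep_finite[OF B(1)] by (intro sum_subsets_card_Suc) simp
  also have "\<dots> \<le> (\<Sum>x\<in>B - T. C * rank_potential n K (rk (insert x X)))"
  proof (rule sum_mono)
    fix x assume x: "x \<in> B - T"
    have "B - T - {x} = B - insert x T" "card (insert x T) = Suc (card T)"
      using x finT by auto
    moreover have "g (insert x S) = rank_potential n K (rk (insert x X \<union> S))" for S
      by (simp add: g_def)
    moreover have "insert x T \<subseteq> B" "insert x T \<subseteq> insert x X"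
      using x Suc.prems by auto
    note IH = Suc.IH[OF this]
    ultimately show "(\<Sum>S | S \<subseteq> B - T - {x} \<and> card S = m. g (insert x S))
        \<le> C * rank_potential n K (rk (insert x X))"
      by (simp add: C_def)
  qed
  also have "\<dots> = C * (\<Sum>x\<in>B - T. rank_potential n K (rk (insert x X)))"
    by (simp add: sum_distrib_left)
  also have "\<dots> \<le> C * (real (K - card T) * rank_potential n K (rk X))"
    using sum_rank_potential_insert_le[OF B rank K Suc.prems]
    by (intro mult_left_mono) (simp_all add: C_def)
  also have "\<dots> = real (Suc m) * (real ((K - card T) choose Suc m) * rank_potential n K (rk X))"
    using binomial_diff_Suc_mult[of K "card T" m] unfolding C_def
    by (simp only: mult.assoc[symmetric]) (simp only: mult_ac)
  finally show ?case unfolding g_def by (simp only: mult_le_cancel_left_pos of_nat_0_less_iff zero_less_Suc)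
qed

lemma nn_integral_uniform_subsets_rank_potential_le:
  assumes B: "indep B" "card B = n" and rank: "rk E = n" and "K \<le> n" "q \<le> n"
  shows "(\<integral>\<^sup>+S. ennreal (rank_potential n K (rk (X \<union> S))) \<partial>pmf_of_set {S. S \<subseteq> B \<and> card S = q})
    \<le> ennreal (real (K choose q) / real (n choose q)) * ennreal (rank_potential n K (rk X))"
proof -
  define C where "C = {S. S \<subseteq> B \<and> card S = q}"
  have fin: "finite C" using indep_finite[OF B(1)] by (simp add: C_def)
  have card: "card C = n choose q" using n_subsets[OF indep_finite[OF B(1)]] B(2) by (simp add: C_def)
  then have "0 < card C" using assms(5) by simp
  then have "C \<noteq> {}" by auto
  then have "(\<integral>\<^sup>+S. ennreal (rank_potential n K (rk (X \<union> S))) \<partial>pmf_of_set C)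
      = ennreal (\<Sum>S\<in>C. rank_potential n K (rk (X \<union> S))) / ennreal (real (n choose q))"
    using fin card by (simp add: nn_integral_pmf_of_set sum_ennreal rank_potential_nonneg ennreal_of_nat_eq_real_of_nat)
  also have "\<dots> \<le> ennreal (real (K choose q) * rank_potential n K (rk X)) / ennreal (real (n choose q))"
    using sum_rank_potential_subsets_le[OF B rank assms(4), of "{}" X q] unfolding C_def
    by (intro divide_right_mono_ennreal ennreal_leI) simp
  also have "\<dots> = ennreal (real (K choose q) / real (n choose q)) * ennreal (rank_potential n K (rk X))"
    using assms(5) by (simp add: divide_ennreal rank_potential_nonneg ennreal_mult[symmetric])
  finally show ?thesis unfolding C_def .
qed

lemma prob_rank_deficient_le:
  assumes rank: "rk E = n" and B: "\<And>i. i \<in> I \<Longrightarrow> indep (B i) \<and> card (B i) = n"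
    and "finite I" "card I \<le> n" "q \<le> n"
  shows "measure_pmf.prob (Pi_pmf I dflt (\<lambda>i. pmf_of_set {S. S \<subseteq> B i \<and> card S = q}))
      {S. rk (\<Union>(S ` I)) < card I}
    \<le> real (n choose (card I - 1)) * (real ((card I - 1) choose q) / real (n choose q)) ^ card I"
proof -
  define K where "K = card I - 1"
  define c where "c = real (K choose q) / real (n choose q)"
  define P where "P = Pi_pmf I dflt (\<lambda>i. pmf_of_set {S. S \<subseteq> B i \<and> card S = q})"
  have K: "K \<le> n" using assms(4) by (simp add: K_def)
  have "indicator {S. rk (\<Union>(S ` I)) < card I} S \<le> ennreal (rank_potential n K (rk ({} \<union> \<Union>(S ` I))))" for S
    using one_le_rank_potential[OF _ K, of "rk (\<Union>(S ` I))"] by (auto simp: K_def indicator_def)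
  then have "emeasure P {S. rk (\<Union>(S ` I)) < card I}
      \<le> (\<integral>\<^sup>+S. ennreal (rank_potential n K (rk ({} \<union> \<Union>(S ` I)))) \<partial>P)"
    by (simp add: nn_integral_mono flip: nn_integral_indicator)
  also have "\<dots> \<le> ennreal c ^ card I * ennreal (rank_potential n K (rk {}))"
    unfolding P_def c_def
    using B assms(5) by (intro nn_integral_Pi_pmf_Union_le assms(3) nn_integral_uniform_subsets_rank_potential_le[OF _ _ rank K]) auto
  also have "\<dots> = ennreal (real (n choose K) * c ^ card I)"
    by (simp add: rank_potential_def c_def ennreal_power ennreal_mult'[symmetric] mult.commute)
  finally show ?thesis
    unfolding P_def c_def K_def by (simp add: measure_pmf.emeasure_eq_measure ennreal_le_iff)
qed

lemma matroid_basis_if_card_eq_rk: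
  assumes "indep T" "card T = rk E"
  shows "matroid_basis E indep T"
  unfolding matroid_basis_def
proof (intro conjI allI impI)
  show "indep T" "T \<subseteq> E" using assms(1) indep_subset_ground by auto
  fix X assume X: "X \<subseteq> E \<and> indep X \<and> T \<subseteq> X"
  then have "finite X" "card X \<le> card T" using assms(2) card_le_rk[of X E] indep_finite by auto
  with X have "T = X" using card_subset_eq[of X T] card_mono[of X T] by simp
  then show "X = T" ..
qed

lemma has_transversal_basis_if_rado_condition:
  assumes rank: "rk E = n"
    and S: "\<And>i. i \<in> {1..n} \<Longrightarrow> S i \<subseteq> E"
    and disjoint: "\<And>i j. i \<in> {1..n} \<Longrightarrow> j \<in> {1..n} \<Longrightarrow> i \<noteq> j \<Longrightarrow> S i \<inter> S j = {}"
    and "rado_condition {1..n} S"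
  shows "has_transversal_basis E indep n S"
proof -
  obtain f where f: "\<forall>i\<in>{1..n}. f i \<in> S i" "inj_on f {1..n}" "indep (f ` {1..n})"
    using indep_transversal_if_rado_condition[OF _ _ assms(4)] S finite_ground by (auto intro: finite_subset)
  have "matroid_basis E indep (f ` {1..n})"
    using f rank by (intro matroid_basis_if_card_eq_rk) (simp_all add: card_image)
  moreover have "f ` {1..n} \<inter> S i = {f i}" if "i \<in> {1..n}" for i
    using f(1) disjoint that by fastforce
  ultimately show ?thesis unfolding has_transversal_basis_def by auto
qed

lemma no_transversal_basis_imp_rank_deficient:
  assumes rank: "rk E = n"
    and bases: "\<And>i. i \<in> {1..n} \<Longrightarrow> matroid_basis E indep (B i)"
    and disjoint: "\<And>i j. i \<in> {1..n} \<Longrightarrow> j \<in> {1..n} \<Longrightarrow> i \<noteq> j \<Longrightarrow> B i \<inter> B j = {}"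
    and "q \<le> n"
  shows "{S. \<not> has_transversal_basis E indep n S} \<inter> set_pmf (random_subsets n B q)
    \<subseteq> (\<Union>k\<in>{1..n}. \<Union>I\<in>{I. I \<subseteq> {1..n} \<and> card I = k}. {S. rk (\<Union>(S ` I)) < card I})"
proof
  fix S assume S: "S \<in> {S. \<not> has_transversal_basis E indep n S} \<inter> set_pmf (random_subsets n B q)"
  have SB: "S i \<subseteq> B i" if "i \<in> {1..n}" for i
    using bases[OF that] card_basis[OF bases[OF that]] rank assms(4) S that
    by (intro set_pmf_random_subsetsD) (auto simp: matroid_basis_def indep_finite)
  have "\<not> rado_condition {1..n} S"
  proof
    assume "rado_condition {1..n} S"
    moreover have "S i \<subseteq> E" if "i \<in> {1..n}" for i
      using SB[OF that] bases[OF that] by (auto simp: matroid_basis_def)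
    moreover have "S i \<inter> S j = {}" if "i \<in> {1..n}" "j \<in> {1..n}" "i \<noteq> j" for i j
      using SB[OF that(1)] SB[OF that(2)] disjoint[OF that] by auto
    ultimately have "has_transversal_basis E indep n S"
      by (intro has_transversal_basis_if_rado_condition[OF rank])
    with S show False by simp
  qed
  then obtain I where I: "I \<subseteq> {1..n}" "rk (\<Union>(S ` I)) < card I"
    by (auto simp: rado_condition_def not_le)
  moreover have "card I \<le> n" using card_mono[OF _ I(1)] by simp
  ultimately show "S \<in> (\<Union>k\<in>{1..n}. \<Union>I\<in>{I. I \<subseteq> {1..n} \<and> card I = k}. {S. rk (\<Union>(S ` I)) < card I})"
    by (intro UN_I[of "card I"] UN_I[of I]) auto
qed

lemma prob_random_subsets_rank_deficient_le:
  assumes rank: "rk E = n" and B: "\<And>i. i \<in> {1..n} \<Longrightarrow> indep (B i) \<and> card (B i) = n"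
    and "I \<subseteq> {1..n}" "q \<le> n"
  shows "measure_pmf.prob (random_subsets n B q) {S. rk (\<Union>(S ` I)) < card I}
    \<le> real (n choose (card I - 1)) * (real ((card I - 1) choose q) / real (n choose q)) ^ card I"
proof -
  have I: "finite I" "card I \<le> n" using assms(3) finite_subset card_mono[OF _ assms(3)] by auto
  have "measure_pmf.prob (random_subsets n B q) {S. rk (\<Union>(S ` I)) < card I}
      = measure_pmf.prob (Pi_pmf I {} (\<lambda>i. pmf_of_set {S. S \<subseteq> B i \<and> card S = q}))
          {S. rk (\<Union>(S ` I)) < card I}"
    unfolding random_subsets_def by (rule prob_Pi_pmf_subset[OF _ assms(3)]) auto
  also have "\<dots> \<le> real (n choose (card I - 1)) * (real ((card I - 1) choose q) / real (n choose q)) ^ card I"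
    using B assms(3) by (intro prob_rank_deficient_le[OF rank _ I assms(4)]) auto
  finally show ?thesis .
qed

lemma prob_no_transversal_basis_le:
  assumes rank: "rk E = n"
    and bases: "\<And>i. i \<in> {1..n} \<Longrightarrow> matroid_basis E indep (B i)"
    and disjoint: "\<And>i j. i \<in> {1..n} \<Longrightarrow> j \<in> {1..n} \<Longrightarrow> i \<noteq> j \<Longrightarrow> B i \<inter> B j = {}"
    and "q \<le> n"
  shows "measure_pmf.prob (random_subsets n B q) {S. \<not> has_transversal_basis E indep n S}
    \<le> (\<Sum>k=1..n. real (n choose k) * real (n choose (k - 1))
                    * (real ((k - 1) choose q) / real (n choose q)) ^ k)"
proof -
  define P where "P = random_subsets n B q"
  define Is where "Is k = {I. I \<subseteq> {1..n} \<and> card I = k}" for k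
  have B: "indep (B i) \<and> card (B i) = n" if "i \<in> {1..n}" for i
    using bases[OF that] card_basis rank by (auto simp: matroid_basis_def)
  have "measure_pmf.prob P {S. \<not> has_transversal_basis E indep n S}
      = measure_pmf.prob P ({S. \<not> has_transversal_basis E indep n S} \<inter> set_pmf P)"
    by (simp add: measure_Int_set_pmf)
  also have "\<dots> \<le> measure_pmf.prob P (\<Union>k\<in>{1..n}. \<Union>I\<in>Is k. {S. rk (\<Union>(S ` I)) < card I})"
    unfolding P_def Is_def
    by (intro measure_pmf.finite_measure_mono no_transversal_basis_imp_rank_deficient) (use assms in auto)
  also have "\<dots> \<le> (\<Sum>k\<in>{1..n}. \<Sum>I\<in>Is k. measure_pmf.prob P {S. rk (\<Union>(S ` I)) < card I})"
    by (intro order_trans[OF measure_pmf.finite_measure_subadditive_finite] sum_mono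
        measure_pmf.finite_measure_subadditive_finite) (auto simp: Is_def)
  also have "\<dots> \<le> (\<Sum>k\<in>{1..n}. \<Sum>I\<in>Is k. real (n choose (k - 1)) * (real ((k - 1) choose q) / real (n choose q)) ^ k)"
    using prob_random_subsets_rank_deficient_le[OF rank B _ assms(4)]
    by (intro sum_mono) (auto simp: P_def Is_def)
  also have "\<dots> = (\<Sum>k=1..n. real (n choose k) * real (n choose (k - 1))
                    * (real ((k - 1) choose q) / real (n choose q)) ^ k)"
    by (simp add: Is_def n_subsets mult.assoc)
  finally show ?thesis unfolding P_def .
qed

end

theorem lemma1p7:
  fixes E :: "'a set" and indep :: "'a set \<Rightarrow> bool"
    and n :: nat and B :: "nat \<Rightarrow> 'a set" and \<alpha> :: nat
  assumes "matroid E indep"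
    and "matroid_rank E indep = n"
    and "n \<ge> 2"
    and "\<forall>i\<in>{1..n}. matroid_basis E indep (B i)"
    and "\<forall>i\<in>{1..n}. \<forall>j\<in>{1..n}. i \<noteq> j \<longrightarrow> B i \<inter> B j = {}"
    and "\<alpha> = 3 * nat \<lceil>ln (real n)\<rceil>"
  shows "measure_pmf.prob (random_subsets n B (min \<alpha> n))
           {S. \<not> has_transversal_basis E indep n S}
         \<le> (\<Sum>k=1..n. real (n choose k) * real (n choose (k - 1))
                        * ((real k - 1) / real n) ^ (k * \<alpha>))"
proof -
  interpret indep_matroid E indep by (rule indep_matroid.intro) (rule assms(1))
  have rank: "rk E = n" using assms(2) by (simp add: matroid_rank_def rk_def)
  have "measure_pmf.prob (random_subsets n B (min \<alpha> n)) {S. \<not> has_transversal_basis E indep n S}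
      \<le> (\<Sum>k=1..n. real (n choose k) * real (n choose (k - 1))
          * (real ((k - 1) choose min \<alpha> n) / real (n choose min \<alpha> n)) ^ k)"
    using assms(4,5) by (intro prob_no_transversal_basis_le[OF rank]) auto
  also have "\<dots> \<le> (\<Sum>k=1..n. real (n choose k) * real (n choose (k - 1)) * ((real k - 1) / real n) ^ (k * \<alpha>))"
  proof (intro sum_mono mult_left_mono)
    fix k assume k: "k \<in> {1..n}"
    then have "(real ((k - 1) choose min \<alpha> n) / real (n choose min \<alpha> n)) ^ k
        \<le> ((real (k - 1) / real n) ^ \<alpha>) ^ k"
      by (intro power_mono binomial_ratio_le_power) auto
    then show "(real ((k - 1) choose min \<alpha> n) / real (n choose min \<alpha> n)) ^ k
        \<le> ((real k - 1) / real n) ^ (k * \<alpha>)"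
      using k by (simp add: power_mult mult.commute of_nat_diff)
  qed simp
  finally show ?thesis .
qed

end
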